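(* Let $C=(c_{k,j})\in\mathbb{R}_{\max}^{p\times n}$, $\mu^+\in\mathbb{Z}_{\ge0}^p$, $\mu^-\in\mathbb{Z}_{\ge0}^n$ and $f(x)=\sum_{k=1}^p\mu^+_k\max_{j\in[n]}(c_{k,j}+x_j)-\sum_{j=1}^n\mu^-_jx_j$. Then: (1) $f(\alpha\otimes x)=f(x)+\alpha\big(\sum_{k\in[p]}\mu^+_k-\sum_{j\in[n]}\mu^-_j\big)$ for any $x\in\mathbb{R}_{\max}^n$ and $\alpha\in\mathbb{R}$; (2) $f(x)+f(y)\ge f(x\oplus y)+f(x\oplus' y)$ for any $x,y\in\mathbb{R}_{\max}^n$.
   Context: $\mathbb{R}_{\max}=\mathbb{R}\cup\{-\infty\}$; $\alpha\otimes x$ is the vector with entries $\alpha+x_j$; $x\oplus y$ and $x\oplus' y$ are the entrywise maximum and minimum of $x$ and $y$. The identities are understood for vectors on which $f$ is well defined. *)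

theory Defs
  imports "HOL-Analysis.Analysis"
begin

text \<open>Max-plus semiring R_max = R \<union> {-\<infinity>} is modelled inside ereal; a vector of
  R_max^n is a function nat \<Rightarrow> ereal whose entries with index in {1..n} are not +\<infinity>,
  a matrix of R_max^(p x n) is a function nat \<Rightarrow> nat \<Rightarrow> ereal with entries (k,j),
  k \<in> {1..p}, j \<in> {1..n}, not +\<infinity>.\<close>

definition rmax_vec :: "nat \<Rightarrow> (nat \<Rightarrow> ereal) \<Rightarrow> bool" where
  "rmax_vec n x \<longleftrightarrow> (\<forall>j\<in>{1..n}. x j \<noteq> \<infinity>)"

definition rmax_mat :: "nat \<Rightarrow> nat \<Rightarrow> (nat \<Rightarrow> nat \<Rightarrow> ereal) \<Rightarrow> bool" where
  "rmax_mat p n C \<longleftrightarrow> (\<forall>k\<in>{1..p}. \<forall>j\<in>{1..n}. C k j \<noteq> \<infinity>)"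

definition tmul :: "real \<Rightarrow> (nat \<Rightarrow> ereal) \<Rightarrow> (nat \<Rightarrow> ereal)" where
  "tmul \<alpha> x = (\<lambda>j. ereal \<alpha> + x j)"

definition tmax :: "(nat \<Rightarrow> ereal) \<Rightarrow> (nat \<Rightarrow> ereal) \<Rightarrow> (nat \<Rightarrow> ereal)" where
  "tmax x y = (\<lambda>j. max (x j) (y j))"

definition tmin :: "(nat \<Rightarrow> ereal) \<Rightarrow> (nat \<Rightarrow> ereal) \<Rightarrow> (nat \<Rightarrow> ereal)" where
  "tmin x y = (\<lambda>j. min (x j) (y j))"

text \<open>Positive part: sum_k mu+_k max_j (c_kj + x_j)  (max over the empty set is -\<infinity>).\<close>
definition fpos :: "nat \<Rightarrow> nat \<Rightarrow> (nat \<Rightarrow> nat \<Rightarrow> ereal) \<Rightarrow> (nat \<Rightarrow> nat) \<Rightarrow> (nat \<Rightarrow> ereal) \<Rightarrow> ereal" where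
  "fpos p n C mup x = (\<Sum>k\<in>{1..p}. ereal (real (mup k)) * (SUP j\<in>{1..n}. C k j + x j))"

definition fneg :: "nat \<Rightarrow> (nat \<Rightarrow> nat) \<Rightarrow> (nat \<Rightarrow> ereal) \<Rightarrow> ereal" where
  "fneg n mum x = (\<Sum>j\<in>{1..n}. ereal (real (mum j)) * x j)"

text \<open>f is well defined at x iff no expression of the form -\<infinity> + \<infinity> occurs, i.e. not both
  the positive part is -\<infinity> and the negative part (which is subtracted) is -\<infinity>.\<close>
definition f_wd :: "nat \<Rightarrow> nat \<Rightarrow> (nat \<Rightarrow> nat \<Rightarrow> ereal) \<Rightarrow> (nat \<Rightarrow> nat) \<Rightarrow> (nat \<Rightarrow> nat) \<Rightarrow> (nat \<Rightarrow> ereal) \<Rightarrow> bool" where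
  "f_wd p n C mup mum x \<longleftrightarrow> \<not> (fpos p n C mup x = -\<infinity> \<and> fneg n mum x = -\<infinity>)"

definition fval :: "nat \<Rightarrow> nat \<Rightarrow> (nat \<Rightarrow> nat \<Rightarrow> ereal) \<Rightarrow> (nat \<Rightarrow> nat) \<Rightarrow> (nat \<Rightarrow> nat) \<Rightarrow> (nat \<Rightarrow> ereal) \<Rightarrow> ereal" where
  "fval p n C mup mum x = fpos p n C mup x - fneg n mum x"

end

theory Submission
  imports Defs
begin

text \<open>Both statements are checked row by row. The max-plus product
  \<open>(C \<otimes> x)\<^sub>k = max\<^sub>j (c\<^sub>k\<^sub>j + x\<^sub>j)\<close> is monotone in \<open>x\<close>, satisfies
  \<open>C \<otimes> (\<alpha> \<otimes> x) = \<alpha> \<otimes> (C \<otimes> x)\<close> and \<open>C \<otimes> (x \<oplus> y) = (C \<otimes> x) \<oplus> (C \<otimes> y)\<close>.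
  With \<open>a = (C \<otimes> x)\<^sub>k\<close> and \<open>b = (C \<otimes> y)\<^sub>k\<close> this gives
  \<open>(C \<otimes> (x \<oplus> y))\<^sub>k + (C \<otimes> (x \<oplus>' y))\<^sub>k \<le> max a b + min a b = a + b\<close>,
  while the linear part is modular because \<open>max s t + min s t = s + t\<close>.
  Weighting with the nonnegative multiplicities and summing gives both claims; in \<open>ereal\<close>
  arithmetic they survive the final subtraction as long as the linear parts are not \<open>\<infinity>\<close>.\<close>

lemma max_add_min: "max a b + min a b = a + (b :: 'a :: {linorder, ab_semigroup_add})"
  by (cases "a \<le> b") (simp_all add: add.commute)

lemma ereal_add_diff_add: "(a + ereal r) - (b + ereal s) = (a - b) + ereal (r - s)"
  by (cases a; cases b) auto

lemma ereal_diff_add_diff: "(a - ereal r) + (b - ereal s) = (a + b) - ereal (r + s)"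
  by (cases a; cases b) auto

lemma ereal_diff_add_diff_le:
  fixes a b c d a' b' c' d' :: ereal
  assumes "c \<noteq> \<infinity>" "d \<noteq> \<infinity>" and "a' + b' \<le> a + b" and "c' + d' = c + d"
  shows "(a' - c') + (b' - d') \<le> (a - c) + (b - d)"
proof (cases "c = -\<infinity> \<or> d = -\<infinity>")
  case True
  then have "(a - c) + (b - d) = \<infinity>"
    by (auto simp: minus_ereal_def)
  then show ?thesis by (simp only: top_ereal_def[symmetric] top_greatest)
next
  case False
  then obtain r s where rs: "c = ereal r" "d = ereal s"
    using assms(1,2) by (cases c; cases d) auto
  obtain r' s' where rs': "c' = ereal r'" "d' = ereal s'" "r' + s' = r + s"
    using assms(4) rs by (cases c'; cases d') auto
  have "(a' - c') + (b' - d') = (a' + b') - ereal (r + s)"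
    using rs' by (simp only: ereal_diff_add_diff)
  also have "\<dots> \<le> (a + b) - ereal (r + s)"
    using assms(3) by (rule ereal_minus_mono) simp
  also have "\<dots> = (a - c) + (b - d)"
    using rs by (simp only: ereal_diff_add_diff)
  finally show ?thesis .
qed

lemma sum_weighted_add_ereal:
  assumes "\<And>k. k \<in> A \<Longrightarrow> 0 \<le> w k"
  shows "(\<Sum>k\<in>A. ereal (w k) * f k) + (\<Sum>k\<in>A. ereal (w k) * g k) = (\<Sum>k\<in>A. ereal (w k) * (f k + g k))"
  unfolding sum.distrib[symmetric] by (rule sum.cong) (simp_all add: ereal_pos_distrib assms)

lemma sum_weighted_shift_ereal:
  assumes "\<And>k. k \<in> A \<Longrightarrow> 0 \<le> w k"
  shows "(\<Sum>k\<in>A. ereal (w k) * (ereal \<alpha> + f k)) = (\<Sum>k\<in>A. ereal (w k) * f k) + ereal (\<alpha> * (\<Sum>k\<in>A. w k))"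
proof -
  have "(\<Sum>k\<in>A. ereal (w k) * (ereal \<alpha> + f k)) = (\<Sum>k\<in>A. ereal (w k) * f k) + (\<Sum>k\<in>A. ereal (w k) * ereal \<alpha>)"
    using sum_weighted_add_ereal[of A w f "\<lambda>_. ereal \<alpha>", OF assms] by (simp add: add.commute)
  also have "(\<Sum>k\<in>A. ereal (w k) * ereal \<alpha>) = ereal (\<alpha> * (\<Sum>k\<in>A. w k))"
    by (simp add: sum_distrib_left mult.commute)
  finally show ?thesis .
qed

definition maxplus_mult_vec :: "nat \<Rightarrow> (nat \<Rightarrow> nat \<Rightarrow> ereal) \<Rightarrow> (nat \<Rightarrow> ereal) \<Rightarrow> nat \<Rightarrow> ereal" where
  "maxplus_mult_vec n C x k = (SUP j\<in>{1..n}. C k j + x j)"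

lemma fpos_eq_sum_maxplus_mult_vec:
  "fpos p n C mup x = (\<Sum>k\<in>{1..p}. ereal (real (mup k)) * maxplus_mult_vec n C x k)"
  by (simp add: fpos_def maxplus_mult_vec_def)

lemma maxplus_mult_vec_mono: "x \<le> y \<Longrightarrow> maxplus_mult_vec n C x k \<le> maxplus_mult_vec n C y k"
  unfolding maxplus_mult_vec_def le_fun_def by (intro SUP_mono' add_left_mono) auto

lemma maxplus_mult_vec_tmul: "maxplus_mult_vec n C (tmul \<alpha> x) k = ereal \<alpha> + maxplus_mult_vec n C x k"
proof (cases "n = 0")
  case True
  then show ?thesis by (simp add: maxplus_mult_vec_def bot_ereal_def)
next
  case False
  have "maxplus_mult_vec n C (tmul \<alpha> x) k = (SUP j\<in>{1..n}. ereal \<alpha> + (C k j + x j))"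
    unfolding maxplus_mult_vec_def tmul_def by (simp add: ac_simps)
  also have "\<dots> = ereal \<alpha> + maxplus_mult_vec n C x k"
    unfolding maxplus_mult_vec_def by (rule SUP_ereal_add_right) (use False in auto)
  finally show ?thesis .
qed

lemma maxplus_mult_vec_tmax:
  "maxplus_mult_vec n C (tmax x y) k = max (maxplus_mult_vec n C x k) (maxplus_mult_vec n C y k)"
proof -
  have "C k j + max (x j) (y j) = max (C k j + x j) (C k j + y j)" for j
    by (rule max_of_mono[symmetric]) (simp add: mono_def add_left_mono)
  then show ?thesis
    using Complete_Lattices.SUP_sup_distrib[where A="{1..n}" and f="\<lambda>j. C k j + x j" and g="\<lambda>j. C k j + y j"]
    unfolding maxplus_mult_vec_def tmax_def sup_max by simp
qed

lemma maxplus_mult_vec_tmax_tmin_le: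
  "maxplus_mult_vec n C (tmax x y) k + maxplus_mult_vec n C (tmin x y) k
     \<le> maxplus_mult_vec n C x k + maxplus_mult_vec n C y k"
proof -
  have "tmin x y \<le> x" "tmin x y \<le> y" by (simp_all add: tmin_def le_fun_def)
  then have "maxplus_mult_vec n C (tmin x y) k \<le> min (maxplus_mult_vec n C x k) (maxplus_mult_vec n C y k)"
    by (simp add: maxplus_mult_vec_mono)
  then have "maxplus_mult_vec n C (tmax x y) k + maxplus_mult_vec n C (tmin x y) k
      \<le> max (maxplus_mult_vec n C x k) (maxplus_mult_vec n C y k)
        + min (maxplus_mult_vec n C x k) (maxplus_mult_vec n C y k)"
    unfolding maxplus_mult_vec_tmax by (rule add_left_mono)
  then show ?thesis by (simp only: max_add_min)
qed

lemma fpos_tmul: "fpos p n C mup (tmul \<alpha> x) = fpos p n C mup x + ereal (\<alpha> * (\<Sum>k\<in>{1..p}. real (mup k)))"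
  unfolding fpos_eq_sum_maxplus_mult_vec maxplus_mult_vec_tmul by (rule sum_weighted_shift_ereal) simp

lemma fneg_tmul: "fneg n mum (tmul \<alpha> x) = fneg n mum x + ereal (\<alpha> * (\<Sum>j\<in>{1..n}. real (mum j)))"
  unfolding fneg_def tmul_def by (rule sum_weighted_shift_ereal) simp

lemma fpos_tmax_tmin_le:
  "fpos p n C mup (tmax x y) + fpos p n C mup (tmin x y) \<le> fpos p n C mup x + fpos p n C mup y"
  unfolding fpos_eq_sum_maxplus_mult_vec sum_weighted_add_ereal[OF of_nat_0_le_iff]
  by (intro sum_mono ereal_mult_left_mono maxplus_mult_vec_tmax_tmin_le) simp

lemma fneg_tmax_tmin: "fneg n mum (tmax x y) + fneg n mum (tmin x y) = fneg n mum x + fneg n mum y"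
  unfolding fneg_def sum_weighted_add_ereal[OF of_nat_0_le_iff] tmax_def tmin_def
  by (simp add: max_add_min)

lemma fneg_neq_PInf: "rmax_vec n x \<Longrightarrow> fneg n mum x \<noteq> \<infinity>"
  unfolding fneg_def rmax_vec_def sum_Pinfty by auto

theorem proposition3p1:
  fixes p n :: nat and C :: "nat \<Rightarrow> nat \<Rightarrow> ereal" and mup mum :: "nat \<Rightarrow> nat"
  assumes "rmax_mat p n C"
  shows "(\<forall>x (\<alpha>::real). rmax_vec n x \<longrightarrow> f_wd p n C mup mum x \<longrightarrow> f_wd p n C mup mum (tmul \<alpha> x) \<longrightarrow>
            fval p n C mup mum (tmul \<alpha> x) = fval p n C mup mum x
              + ereal (\<alpha> * ((\<Sum>k\<in>{1..p}. real (mup k)) - (\<Sum>j\<in>{1..n}. real (mum j)))))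
        \<and> (\<forall>x y. rmax_vec n x \<longrightarrow> rmax_vec n y \<longrightarrow> f_wd p n C mup mum x \<longrightarrow> f_wd p n C mup mum y
            \<longrightarrow> f_wd p n C mup mum (tmax x y) \<longrightarrow> f_wd p n C mup mum (tmin x y) \<longrightarrow>
            fval p n C mup mum x + fval p n C mup mum y
              \<ge> fval p n C mup mum (tmax x y) + fval p n C mup mum (tmin x y))"
proof (intro conjI allI impI)
  fix x and \<alpha> :: real
  show "fval p n C mup mum (tmul \<alpha> x) = fval p n C mup mum x
          + ereal (\<alpha> * ((\<Sum>k\<in>{1..p}. real (mup k)) - (\<Sum>j\<in>{1..n}. real (mum j))))"
    unfolding fval_def fpos_tmul fneg_tmul ereal_add_diff_add by (simp add: right_diff_distrib)
next
  fix x y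
  assume "rmax_vec n x" "rmax_vec n y"
  then show "fval p n C mup mum x + fval p n C mup mum y
               \<ge> fval p n C mup mum (tmax x y) + fval p n C mup mum (tmin x y)"
    unfolding fval_def
    by (intro ereal_diff_add_diff_le fneg_neq_PInf fpos_tmax_tmin_le fneg_tmax_tmin)
qed

end
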